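(* In the setting below, for every $k\ge0$ (within the range where the maps are defined) one has $\operatorname{gen\text{-}rk}_{\mathbb C}(\Gamma_{k+2})=m+\operatorname{gen\text{-}rk}_{\mathbb C}(\psi^{k+1})$. Hence $\operatorname{gen\text{-}rk}_{\mathbb C}(\psi^{k+1})=m+e_1+\cdots+e_k$ for $0\le k\le\kappa_p$ and $\operatorname{gen\text{-}rk}_{\mathbb C}(\psi^{k+1})=m+e_1+\cdots+e_{\kappa_p}$ for $k\ge\kappa_p$. The same statements hold with $\underline\Gamma_{k+2}$ and $\underline\psi^{k+1}$ in place of $\Gamma_{k+2}$ and $\psi^{k+1}$.
   Context: Setting: $M\subset\mathbb C^n$ is a real analytic CR-generic submanifold, $p\in M$, $m=\dim_{CR}M\ge1$, $d=\operatorname{codim}_{\mathbb R}M\ge1$, $n=m+d$. Local holomorphic coordinates $t=(w,z)\in\mathbb C^m\times\mathbb C^d$ vanish at $p$ and $M$ is given near $0$ by $z=\bar z+i\bar\Theta(w,\bar w,\bar z)$, equivalently $\bar z=z-i\Theta(\bar w,w,z)$, with $\Theta$ a $\mathbb C^d$-valued convergent power series ($\bar\Theta$: conjugated coefficients). Extrinsic complexification: $\mathcal M=\{(t,\tau)=(w,z,\zeta,\xi)\ \text{near }0: z=\xi+i\bar\Theta(w,\zeta,\xi)\}$; $p^c=(p,\bar p)$; $\pi_t(t,\tau)=t$, $\pi_\tau(t,\tau)=\tau$. $m$-flows on $\mathcal M$: $\mathcal L_w(w_0,z_0,\zeta_0,\xi_0)=(w_0+w,\xi_0+i\bar\Theta(w_0+w,\zeta_0,\xi_0),\zeta_0,\xi_0)$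 and $\underline{\mathcal L}_\zeta(w_0,z_0,\zeta_0,\xi_0)=(w_0,z_0,\zeta_0+\zeta,z_0-i\Theta(\zeta_0+\zeta,w_0,z_0))$. Segre $k$-chains: $\Gamma_1(w_1)=\mathcal L_{w_1}(p^c)$, $\Gamma_2=\underline{\mathcal L}_{w_2}(\Gamma_1)$, $\Gamma_3=\mathcal L_{w_3}(\Gamma_2)$, etc., alternating; $\underline\Gamma_k$ likewise starting with $\underline{\mathcal L}_{w_1}(p^c)$. Projected maps: $\psi^{2j}:=\pi_\tau\circ\Gamma_{2j}$, $\psi^{2j+1}:=\pi_t\circ\Gamma_{2j+1}$, $\underline\psi^{2j}:=\pi_t\circ\underline\Gamma_{2j}$, $\underline\psi^{2j+1}:=\pi_\tau\circ\underline\Gamma_{2j+1}$. $\operatorname{gen\text{-}rk}_{\mathbb C}$ denotes generic (maximal) rank. Segre multitype: $r_k$ generic rank of $\Gamma_k$, $e_k:=r_{k+2}-r_{k+1}$, $\kappa_p$ the integer with $e_1,\dots,e_{\kappa_p}>0$ and $e_l=0$ for $l>\kappa_p$. *)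

theory Defs
  imports "HOL-Analysis.Analysis"
begin

text \<open>Points of C^n = C^m x C^d are pairs t = (w,z); points of C^n x C^n (the
extrinsic complexification lives there) are pairs (t,tau) = ((w,z),(zeta,xi)).\<close>

type_synonym ('m,'d) cpt = "(complex^'m) \<times> (complex^'d)"
type_synonym ('m,'d) cpt2 = "('m,'d) cpt \<times> ('m,'d) cpt"

definition cj :: "complex^'n \<Rightarrow> complex^'n" where
  "cj v = (\<chi> i. cnj (v $ i))"

text \<open>Theta-bar: the power series with conjugated coefficients.\<close>
definition Theta_bar ::
  "(complex^'m \<Rightarrow> complex^'m \<Rightarrow> complex^'d \<Rightarrow> complex^'d)
   \<Rightarrow> complex^'m \<Rightarrow> complex^'m \<Rightarrow> complex^'d \<Rightarrow> complex^'d" where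
  "Theta_bar \<Theta> a b c = cj (\<Theta> (cj a) (cj b) (cj c))"

text \<open>Flattening into coordinate vectors (to speak about Jacobians/ranks).\<close>
definition flat3 :: "(complex^'m) \<times> (complex^'m) \<times> (complex^'d) \<Rightarrow> complex^(('m+'m)+'d)" where
  "flat3 x = (\<chi> s. case s of Inl (Inl i) \<Rightarrow> fst x $ i | Inl (Inr i) \<Rightarrow> fst (snd x) $ i
                          | Inr j \<Rightarrow> snd (snd x) $ j)"

definition flat_t :: "('m::finite,'d::finite) cpt \<Rightarrow> complex^('m+'d)" where
  "flat_t t = (\<chi> s. case s of Inl i \<Rightarrow> fst t $ i | Inr j \<Rightarrow> snd t $ j)"

definition flat_pt :: "('m::finite,'d::finite) cpt2 \<Rightarrow> complex^(('m+'d)+('m+'d))" where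
  "flat_pt p = (\<chi> s. case s of Inl a \<Rightarrow> flat_t (fst p) $ a | Inr b \<Rightarrow> flat_t (snd p) $ b)"

text \<open>For functions of several complex variables this is equivalent to being given by
convergent power series.\<close>
definition holomorphic_near_0 ::
  "(complex^'m \<Rightarrow> complex^'m \<Rightarrow> complex^'d \<Rightarrow> complex^'d) \<Rightarrow> bool" where
  "holomorphic_near_0 \<Theta> \<longleftrightarrow>
     (\<exists>U. open U \<and> (0::complex^(('m+'m)+'d)) \<in> U \<and>
        (\<forall>x. flat3 x \<in> U \<longrightarrow>
           (\<exists>A::complex^(('m+'m)+'d)^'d.
              ((\<lambda>y. \<Theta> (fst y) (fst (snd y)) (snd (snd y))) has_derivative
                 (\<lambda>h. A *v flat3 h)) (at x))))"

definition Lflow :: "(complex^'m \<Rightarrow> complex^'m \<Rightarrow> complex^'d \<Rightarrow> complex^'d)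
   \<Rightarrow> complex^'m \<Rightarrow> ('m::finite,'d::finite) cpt2 \<Rightarrow> ('m::finite,'d::finite) cpt2" where
  "Lflow \<Theta> w p = (case p of ((w0,z0),(\<zeta>0,\<xi>0)) \<Rightarrow>
      ((w0 + w, \<xi>0 + \<i> *s Theta_bar \<Theta> (w0 + w) \<zeta>0 \<xi>0), (\<zeta>0, \<xi>0)))"

definition Lbarflow :: "(complex^'m \<Rightarrow> complex^'m \<Rightarrow> complex^'d \<Rightarrow> complex^'d)
   \<Rightarrow> complex^'m \<Rightarrow> ('m::finite,'d::finite) cpt2 \<Rightarrow> ('m::finite,'d::finite) cpt2" where
  "Lbarflow \<Theta> \<zeta> p = (case p of ((w0,z0),(\<zeta>0,\<xi>0)) \<Rightarrow>
      ((w0, z0), (\<zeta>0 + \<zeta>, z0 - \<i> *s \<Theta> (\<zeta>0 + \<zeta>) w0 z0)))"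

text \<open>Segre k-chains Gamma_k (first flow L) and underline-Gamma_k (first flow
underline-L), as functions of the parameters ws 1, ..., ws k; p^c is the origin.\<close>
fun Gamma :: "(complex^'m \<Rightarrow> complex^'m \<Rightarrow> complex^'d \<Rightarrow> complex^'d)
   \<Rightarrow> nat \<Rightarrow> (nat \<Rightarrow> complex^'m) \<Rightarrow> ('m::finite,'d::finite) cpt2" where
  "Gamma \<Theta> 0 ws = 0"
| "Gamma \<Theta> (Suc k) ws =
     (if odd (Suc k) then Lflow \<Theta> (ws (Suc k)) (Gamma \<Theta> k ws)
      else Lbarflow \<Theta> (ws (Suc k)) (Gamma \<Theta> k ws))"

fun Gamma_u :: "(complex^'m \<Rightarrow> complex^'m \<Rightarrow> complex^'d \<Rightarrow> complex^'d)
   \<Rightarrow> nat \<Rightarrow> (nat \<Rightarrow> complex^'m) \<Rightarrow> ('m::finite,'d::finite) cpt2" where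
  "Gamma_u \<Theta> 0 ws = 0"
| "Gamma_u \<Theta> (Suc k) ws =
     (if odd (Suc k) then Lbarflow \<Theta> (ws (Suc k)) (Gamma_u \<Theta> k ws)
      else Lflow \<Theta> (ws (Suc k)) (Gamma_u \<Theta> k ws))"

definition psi :: "(complex^'m \<Rightarrow> complex^'m \<Rightarrow> complex^'d \<Rightarrow> complex^'d)
   \<Rightarrow> nat \<Rightarrow> (nat \<Rightarrow> complex^'m) \<Rightarrow> ('m::finite,'d::finite) cpt" where
  "psi \<Theta> k ws = (if even k then snd (Gamma \<Theta> k ws) else fst (Gamma \<Theta> k ws))"

definition psi_u :: "(complex^'m \<Rightarrow> complex^'m \<Rightarrow> complex^'d \<Rightarrow> complex^'d)
   \<Rightarrow> nat \<Rightarrow> (nat \<Rightarrow> complex^'m) \<Rightarrow> ('m::finite,'d::finite) cpt" where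
  "psi_u \<Theta> k ws = (if even k then fst (Gamma_u \<Theta> k ws) else snd (Gamma_u \<Theta> k ws))"

definition vupd :: "complex^'m \<Rightarrow> 'm \<Rightarrow> complex \<Rightarrow> complex^'m" where
  "vupd v i c = (\<chi> l. if l = i then c else v $ l)"

definition jac_cols :: "((nat \<Rightarrow> complex^'m) \<Rightarrow> complex^'r) \<Rightarrow> nat \<Rightarrow> (nat \<Rightarrow> complex^'m)
   \<Rightarrow> (complex^'r) set" where
  "jac_cols F k ws = {(\<chi> r. deriv (\<lambda>c. F (ws(j := vupd (ws j) i c)) $ r) (ws j $ i)) | j i.
                        j \<in> {1..k}}"

definition rank_at :: "((nat \<Rightarrow> complex^'m) \<Rightarrow> complex^'r) \<Rightarrow> nat \<Rightarrow> (nat \<Rightarrow> complex^'m) \<Rightarrow> nat" where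
  "rank_at F k ws = vec.dim (jac_cols F k ws)"

definition gen_rk :: "((nat \<Rightarrow> complex^'m) \<Rightarrow> complex^'r) \<Rightarrow> nat \<Rightarrow> nat" where
  "gen_rk F k = (GREATEST r. \<forall>\<epsilon>>0. \<exists>ws. (\<forall>j\<in>{1..k}. norm (ws j) < \<epsilon>) \<and> r \<le> rank_at F k ws)"

definition r_rk :: "(complex^'m \<Rightarrow> complex^'m \<Rightarrow> complex^'d \<Rightarrow> complex^'d) \<Rightarrow> nat \<Rightarrow> nat" where
  "r_rk \<Theta> k = gen_rk (\<lambda>ws. flat_pt (Gamma \<Theta> k ws)) k"

definition e_mt :: "(complex^'m \<Rightarrow> complex^'m \<Rightarrow> complex^'d \<Rightarrow> complex^'d) \<Rightarrow> nat \<Rightarrow> int" where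
  "e_mt \<Theta> k = int (r_rk \<Theta> (k + 2)) - int (r_rk \<Theta> (k + 1))"

end

theory Submission
  imports Defs
begin

text \<open>
  Along a coordinate line of the parameters the Jacobian of a Segre map is computed by the chain
  rule. A step \<Gamma>_{k+2} = underline-L_w(\<Gamma>_{k+1}) keeps t fixed and moves \<zeta> by w. So the m Jacobian
  columns belonging to w_{k+2} are independent with vanishing t-part, the t-parts of the other
  columns are the Jacobian columns of \<psi>^{k+1} = \<pi>_t \<circ> \<Gamma>_{k+1}, and in every column the \<xi>-part is
  determined by the others through the linearised flow equation. Hence
  rank \<Gamma>_{k+2} = m + rank \<psi>^{k+1} at every parameter near 0, and the same holds for generic ranks.
  The antiholomorphic involution (t, \<tau>) \<mapsto> (conj \<tau>, conj t) turns L into underline-L and \<Gamma> into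
  underline-\<Gamma> and preserves ranks, which settles the L-steps and the underlined chains. The
  formula in terms of the multitype telescopes from gen-rk \<psi>^1 = m.
\<close>

section \<open>Linear algebra over \<complex>\<close>

abbreviation clin :: "(complex^'a::finite \<Rightarrow> complex^'b::finite) \<Rightarrow> bool" where
  "clin f \<equiv> Vector_Spaces.linear ((*s) :: complex \<Rightarrow> _) ((*s) :: complex \<Rightarrow> _) f"

lemma clinI:
  fixes f :: "complex^'a::finite \<Rightarrow> complex^'b::finite"
  assumes "\<And>x y. f (x + y) = f x + f y" "\<And>c x. f (c *s x) = c *s f x"
  shows "clin f"
  using assms by (auto simp: Vector_Spaces.linear_def module_hom_axioms_def vec.vector_space_axioms
      vector_space_def module_hom_def vec.module_axioms)

lemma clin_span_image:
  fixes f :: "complex^'a::finite \<Rightarrow> complex^'b::finite"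
  assumes "clin f" shows "vec.span (f ` X) = f ` vec.span X"
  using module_hom.span_image[OF module_hom_linearI[OF assms]] by simp

lemma independent_if_linear_image_axis:
  fixes Q :: "complex^'n::finite \<Rightarrow> complex^'m::finite" and c :: "'m \<Rightarrow> complex^'n"
  assumes Q: "clin Q" and Qc: "\<And>i. Q (c i) = axis i 1"
  shows "vec.independent (range c)"
proof (rule vec.card_le_dim_spanning[OF order_refl vec.span_superset])
  have "Q ` range c = cart_basis" by (auto simp: cart_basis_def image_image Qc)
  then have "CARD('m) = vec.dim (Q ` range c)"
    by (simp add: vec.dim_eq_card_independent vec.independent_Basis card_cart_basis)
  also have "\<dots> \<le> vec.dim (range c)" by (rule vec.dim_image_le[OF Q])
  finally show "card (range c) \<le> vec.dim (range c)"
    using card_image_le[of UNIV c] by simp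
qed simp

lemma obtain_lifted_basis:
  fixes P :: "complex^'n::finite \<Rightarrow> complex^'k::finite"
  obtains L where "L \<subseteq> C" "finite L" "inj_on P L" "vec.independent (P ` L)"
    "P ` C \<subseteq> vec.span (P ` L)" "card L = vec.dim (P ` C)"
proof -
  obtain B where B: "B \<subseteq> P ` C" "vec.independent B" "P ` C \<subseteq> vec.span B" "card B = vec.dim (P ` C)"
    using vec.basis_exists by blast
  define L where "L = inv_into C P ` B"
  have PL: "P ` L = B" unfolding L_def using B(1) by (rule image_inv_into_cancel[OF refl])
  have "inj_on (inv_into C P) B" using B(1) inj_on_inv_into inj_on_subset by blast
  then have card: "card L = card B" unfolding L_def by (rule card_image)
  have fin: "finite L" using vec.finiteI_independent[OF B(2)] by (simp add: L_def)
  show thesis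
  proof (rule that)
    show "L \<subseteq> C" using B(1) by (auto simp: L_def inv_into_into)
    show "inj_on P L" using fin card PL by (intro eq_card_imp_inj_on) simp_all
  qed (use fin card PL B in simp_all)
qed

lemma independent_Un_kernel:
  fixes P :: "complex^'n::finite \<Rightarrow> complex^'k::finite"
  assumes P: "clin P" and L: "finite L" "inj_on P L" "vec.independent (P ` L)"
    and K: "vec.independent K" "\<And>v. v \<in> K \<Longrightarrow> P v = 0"
  shows "vec.independent (L \<union> K)"
proof -
  have "vec.independent (L' \<union> K)" if "finite L'" "L' \<subseteq> L" for L'
    using that
  proof (induction L' rule: finite_induct)
    case empty
    then show ?case using K by simp
  next
    case (insert l L')
    have "P ` L' \<subseteq> P ` L - {P l}"
      using insert.hyps(2) insert.prems L(2) by (auto simp: inj_on_def)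
    then have "P l \<notin> vec.span (P ` L')"
      using L(3) insert.prems vec.span_mono unfolding vec.dependent_def by blast
    moreover have "P ` (L' \<union> K) \<subseteq> insert 0 (P ` L')" using K(2) by auto
    then have "P ` vec.span (L' \<union> K) \<subseteq> vec.span (P ` L')"
      using vec.span_mono vec.span_insert_0 clin_span_image[OF P] by metis
    ultimately have "l \<notin> vec.span (L' \<union> K)" by blast
    then show ?case using insert vec.independent_insertI by simp
  qed
  then show ?thesis using L(1) by blast
qed

lemma kernel_subset_span:
  fixes P :: "complex^'n::finite \<Rightarrow> complex^'k::finite"
    and Q :: "complex^'n \<Rightarrow> complex^'m::finite" and c :: "'m \<Rightarrow> complex^'n"
  assumes P: "clin P" and Q: "clin Q" and S: "vec.subspace S" "range c \<subseteq> S"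
    and Pc: "\<And>i. P (c i) = 0" and Qc: "\<And>i. Q (c i) = axis i 1"
    and ker: "\<And>v. v \<in> S \<Longrightarrow> P v = 0 \<Longrightarrow> Q v = 0 \<Longrightarrow> v = 0"
    and v: "v \<in> S" "P v = 0"
  shows "v \<in> vec.span (range c)"
proof -
  define s where "s = (\<Sum>i\<in>UNIV. Q v $ i *s c i)"
  have s: "s \<in> vec.span (range c)" unfolding s_def
    by (intro vec.span_sum vec.span_scale vec.span_base rangeI)
  then have "v - s \<in> S" using v(1) S vec.span_minimal vec.subspace_diff by blast
  moreover have "P (v - s) = 0" "Q (v - s) = 0"
    using v(2) by (simp_all add: s_def vec.linear_diff vec.linear_sum vec.linear_scale P Q Pc Qc
        basis_expansion)
  ultimately have "v - s = 0" by (rule ker)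
  then show ?thesis using s by simp
qed

(* Q and ker say that the c i form a basis of the kernel of P on S. *)
lemma dim_Un_kernel_basis:
  fixes P :: "complex^'n::finite \<Rightarrow> complex^'k::finite"
    and Q :: "complex^'n \<Rightarrow> complex^'m::finite" and c :: "'m \<Rightarrow> complex^'n"
  assumes P: "clin P" and Q: "clin Q" and S: "vec.subspace S" "C \<subseteq> S" "range c \<subseteq> S"
    and Pc: "\<And>i. P (c i) = 0" and Qc: "\<And>i. Q (c i) = axis i 1"
    and ker: "\<And>v. v \<in> S \<Longrightarrow> P v = 0 \<Longrightarrow> Q v = 0 \<Longrightarrow> v = 0"
  shows "vec.dim (C \<union> range c) = CARD('m) + vec.dim (P ` C)"
proof -
  obtain L where L: "L \<subseteq> C" "finite L" "inj_on P L" "vec.independent (P ` L)"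
    "P ` C \<subseteq> vec.span (P ` L)" "card L = vec.dim (P ` C)"
    by (rule obtain_lifted_basis)
  have spans: "C \<subseteq> vec.span (L \<union> range c)"
  proof
    fix x assume x: "x \<in> C"
    then obtain y where y: "y \<in> vec.span L" "P y = P x"
      using L(5) clin_span_image[OF P] by (metis image_iff image_subset_iff)
    have "y \<in> S" using y(1) L(1) S vec.span_minimal by blast
    then have "x - y \<in> S" using x S vec.subspace_diff by blast
    moreover have "P (x - y) = 0" using y(2) by (simp add: vec.linear_diff[OF P])
    ultimately have "x - y \<in> vec.span (range c)"
      using kernel_subset_span[OF P Q S(1,3) Pc Qc ker] by blast
    then have "(x - y) + y \<in> vec.span (L \<union> range c)"
      using y(1) vec.span_mono[of _ "L \<union> range c"] by (blast intro: vec.span_add)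
    then show "x \<in> vec.span (L \<union> range c)" by simp
  qed
  have indep_c: "vec.independent (range c)" by (rule independent_if_linear_image_axis[OF Q Qc])
  have indep: "vec.independent (L \<union> range c)"
    by (rule independent_Un_kernel[OF P L(2-4) indep_c]) (auto simp: Pc)
  have "card (L \<union> range c) = vec.dim (C \<union> range c)"
  proof (rule vec.basis_card_eq_dim[OF _ _ indep])
    show "C \<union> range c \<subseteq> vec.span (L \<union> range c)"
      using spans vec.span_superset[of "L \<union> range c"] by blast
  qed (use L(1) in auto)
  moreover have "L \<inter> range c = {}"
  proof -
    have "0 \<notin> P ` L" using L(4) vec.dependent_zero by blast
    then show ?thesis using Pc by (auto simp: image_iff)
  qed
  moreover have "card (range c) = CARD('m)"
  proof -
    have "inj c" using Qc by (metis axis_eq_axis injI zero_neq_one)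
    then show ?thesis by (simp add: card_image)
  qed
  ultimately show ?thesis using L(2,6) by (simp add: card_Un_disjoint)
qed

lemma cj_cj [simp]: "cj (cj v) = v"
  by (simp add: cj_def vec_eq_iff)

lemma cj_nth [simp]: "cj v $ i = cnj (v $ i)"
  by (simp add: cj_def)

lemma cj_add [simp]: "cj (a + b) = cj a + cj b"
  by (simp add: cj_def vec_eq_iff)

lemma cj_diff [simp]: "cj (a - b) = cj a - cj b"
  by (simp add: cj_def vec_eq_iff)

lemma cj_scale [simp]: "cj (k *s x) = cnj k *s cj x"
  by (simp add: cj_def vec_eq_iff)

lemma cj_0 [simp]: "cj 0 = 0"
  by (simp add: cj_def vec_eq_iff)

lemma norm_cj [simp]: "norm (cj v) = norm v"
  by (simp add: norm_vec_def cj_def)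

lemma cj_span: "cj ` vec.span X \<subseteq> vec.span (cj ` (X :: (complex^'n::finite) set))"
proof
  fix y assume "y \<in> cj ` vec.span X"
  then obtain x where x: "x \<in> vec.span X" "y = cj x" by blast
  have "vec.subspace {x. cj x \<in> vec.span (cj ` X)}"
    unfolding vec.subspace_def by (auto intro: vec.span_add vec.span_scale vec.span_zero)
  then have "cj x \<in> vec.span (cj ` X)"
    using vec.span_induct[OF x(1), of "\<lambda>x. cj x \<in> vec.span (cj ` X)"] by (auto intro: vec.span_base)
  then show "y \<in> vec.span (cj ` X)" using x(2) by simp
qed

lemma dim_cj_le: "vec.dim (cj ` X) \<le> vec.dim (X :: (complex^'n::finite) set)"
proof -
  obtain B where B: "B \<subseteq> X" "vec.independent B" "X \<subseteq> vec.span B" "card B = vec.dim X"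
    using vec.basis_exists by blast
  have "finite B" using B(2) vec.finiteI_independent by blast
  have "cj ` X \<subseteq> vec.span (cj ` B)" using B(3) cj_span[of B] by blast
  then have "vec.dim (cj ` X) \<le> card (cj ` B)" by (rule vec.dim_le_card) (use \<open>finite B\<close> in simp)
  also have "\<dots> \<le> card B" using \<open>finite B\<close> by (rule card_image_le)
  finally show ?thesis using B(4) by simp
qed

lemma dim_cj: "vec.dim (cj ` X) = vec.dim (X :: (complex^'n::finite) set)"
proof -
  have "vec.dim X = vec.dim (cj ` cj ` X)" by (simp add: image_image)
  also have "\<dots> \<le> vec.dim (cj ` X)" by (rule dim_cj_le)
  finally show ?thesis using dim_cj_le[of X] by simp
qed

section \<open>Complex derivatives along curves\<close>

(* Componentwise, as jac_cols reads derivatives off. *)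
definition has_cderiv :: "(complex \<Rightarrow> complex^'n::finite) \<Rightarrow> complex^'n \<Rightarrow> complex \<Rightarrow> bool" where
  "has_cderiv f v z \<longleftrightarrow> (\<forall>r. ((\<lambda>c. f c $ r) has_field_derivative v $ r) (at z))"

lemma has_cderiv_imp_deriv: "has_cderiv f v z \<Longrightarrow> (\<chi> r. deriv (\<lambda>c. f c $ r) z) = v"
  unfolding has_cderiv_def by (simp add: vec_eq_iff DERIV_imp_deriv)

lemma has_cderiv_const: "has_cderiv (\<lambda>c. k) 0 z"
  unfolding has_cderiv_def by simp

lemma has_cderiv_add: "has_cderiv f a z \<Longrightarrow> has_cderiv g b z \<Longrightarrow> has_cderiv (\<lambda>c. f c + g c) (a + b) z"
  unfolding has_cderiv_def by (auto intro: derivative_intros)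

lemma has_cderiv_diff: "has_cderiv f a z \<Longrightarrow> has_cderiv g b z \<Longrightarrow> has_cderiv (\<lambda>c. f c - g c) (a - b) z"
  unfolding has_cderiv_def by (auto intro: derivative_intros)

lemma has_cderiv_scale: "has_cderiv f a z \<Longrightarrow> has_cderiv (\<lambda>c. k *s f c) (k *s a) z"
  unfolding has_cderiv_def by (auto intro: DERIV_cmult)

lemma has_cderiv_vupd: "has_cderiv (\<lambda>c. vupd x i c) (axis i 1) z"
  unfolding has_cderiv_def vupd_def axis_def by (auto intro: derivative_eq_intros)

lemma has_cderiv_cnj: "has_cderiv f v (cnj z) \<Longrightarrow> has_cderiv (\<lambda>c. cj (f (cnj c))) (cj v) z"
  unfolding has_cderiv_def
proof
  fix r assume "\<forall>r. ((\<lambda>c. f c $ r) has_field_derivative v $ r) (at (cnj z))"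
  then have "((cnj \<circ> (\<lambda>c. f c $ r) \<circ> cnj) has_field_derivative cnj (v $ r)) (at z)"
    by (intro has_field_derivative_cnj_cnj) simp
  then show "((\<lambda>c. cj (f (cnj c)) $ r) has_field_derivative cj v $ r) (at z)"
    by (simp add: cj_def o_def)
qed

lemma bounded_linear_axis: "bounded_linear (axis r :: complex \<Rightarrow> complex^'n::finite)"
proof (rule bounded_linear_intro[where K=1])
  show "norm (axis r x) \<le> norm x * 1" for x :: complex
    unfolding norm_vec_def L2_set_def axis_def
    by (simp add: if_distrib[of "\<lambda>t. (norm t)\<^sup>2"] cong: if_cong)
qed (auto simp: vec_eq_iff axis_def)

lemma has_cderiv_iff_has_derivative:
  "has_cderiv f v z \<longleftrightarrow> (f has_derivative (\<lambda>h. h *s v)) (at z)"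
proof
  assume "has_cderiv f v z"
  then have "((\<lambda>c. \<Sum>r\<in>UNIV. axis r (f c $ r)) has_derivative (\<lambda>h. \<Sum>r\<in>UNIV. axis r (v $ r * h))) (at z)"
    unfolding has_cderiv_def has_field_derivative_def
    by (intro has_derivative_sum bounded_linear.has_derivative[OF bounded_linear_axis]) blast
  moreover have "(\<lambda>c. \<Sum>r\<in>UNIV. axis r (f c $ r)) = f"
    by (simp add: fun_eq_iff vec_eq_iff axis_def)
  moreover have "(\<lambda>h. \<Sum>r\<in>UNIV. axis r (v $ r * h)) = (\<lambda>h. h *s v)"
    by (auto simp: vec_eq_iff axis_def)
  ultimately show "(f has_derivative (\<lambda>h. h *s v)) (at z)"
    by simp
next
  assume f: "(f has_derivative (\<lambda>h. h *s v)) (at z)"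
  show "has_cderiv f v z"
    unfolding has_cderiv_def has_field_derivative_def
  proof
    fix r
    have "(\<lambda>h. (h *s v) $ r) = (*) (v $ r)" by (auto simp: mult.commute)
    then show "((\<lambda>c. f c $ r) has_derivative (*) (v $ r)) (at z)"
      using bounded_linear.has_derivative[OF bounded_linear_vec_nth f, of r] by (simp only:)
  qed
qed

lemma flat3_scale: "flat3 (h *s a, h *s b, h *s e) = h *s flat3 (a, b, e)"
  by (simp add: flat3_def vec_eq_iff split: sum.split)

lemma flat3_add: "flat3 (a + a', b + b', e + e') = flat3 (a, b, e) + flat3 (a', b', e')"
  by (simp add: flat3_def vec_eq_iff split: sum.split)

lemma flat3_zero [simp]: "flat3 (0, 0, 0) = 0"
  by (simp add: flat3_def vec_eq_iff split: sum.split)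

lemma has_cderiv_compose3:
  fixes \<Theta> :: "complex^'m::finite \<Rightarrow> complex^'m \<Rightarrow> complex^'d::finite \<Rightarrow> complex^'r::finite"
  assumes \<Theta>: "((\<lambda>(a, b, e). \<Theta> a b e) has_derivative (\<lambda>h. A *v flat3 h)) (at (a z, b z, e z))"
    and "has_cderiv a va z" "has_cderiv b vb z" "has_cderiv e ve z"
  shows "has_cderiv (\<lambda>c. \<Theta> (a c) (b c) (e c)) (A *v flat3 (va, vb, ve)) z"
proof -
  have "((\<lambda>c. (a c, b c, e c)) has_derivative (\<lambda>h. (h *s va, h *s vb, h *s ve))) (at z)"
    using assms(2-4) by (intro has_derivative_Pair) (simp_all add: has_cderiv_iff_has_derivative)
  from diff_chain_at[OF this \<Theta>]
  have "((\<lambda>c. \<Theta> (a c) (b c) (e c)) has_derivative (\<lambda>h. A *v flat3 (h *s va, h *s vb, h *s ve))) (at z)"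
    by (simp add: o_def)
  then show ?thesis
    by (simp add: has_cderiv_iff_has_derivative flat3_scale vec.scale)
qed

definition has_pt_cderiv ::
  "(complex \<Rightarrow> ('m::finite,'d::finite) cpt2) \<Rightarrow> ('m,'d) cpt2 \<Rightarrow> complex \<Rightarrow> bool" where
  "has_pt_cderiv p v z \<longleftrightarrow>
     has_cderiv (\<lambda>c. fst (fst (p c))) (fst (fst v)) z \<and>
     has_cderiv (\<lambda>c. snd (fst (p c))) (snd (fst v)) z \<and>
     has_cderiv (\<lambda>c. fst (snd (p c))) (fst (snd v)) z \<and>
     has_cderiv (\<lambda>c. snd (snd (p c))) (snd (snd v)) z"

lemma has_pt_cderiv_const: "has_pt_cderiv (\<lambda>c. k) 0 z"
  by (simp add: has_pt_cderiv_def has_cderiv_const)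

lemma has_pt_cderiv_flat:
  assumes "has_pt_cderiv p v z"
  shows "has_cderiv (\<lambda>c. flat_pt (p c)) (flat_pt v) z"
    and "has_cderiv (\<lambda>c. flat_t (fst (p c))) (flat_t (fst v)) z"
    and "has_cderiv (\<lambda>c. flat_t (snd (p c))) (flat_t (snd v)) z"
  using assms unfolding has_pt_cderiv_def has_cderiv_def flat_pt_def flat_t_def
  by (auto split: sum.split)

lemma Lbarflow_eq:
  "Lbarflow \<Theta> \<zeta> p =
     (fst p, fst (snd p) + \<zeta>, snd (fst p) - \<i> *s \<Theta> (fst (snd p) + \<zeta>) (fst (fst p)) (snd (fst p)))"
  by (cases p) (auto simp: Lbarflow_def split: prod.split)

(* The differential of Lbarflow: A is the Jacobian matrix of \<Theta> at the point reached, v and u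
   are the increments of the point and of the flow parameter. *)
definition dLbarflow :: "complex^(('m+'m)+'d)^'d \<Rightarrow> ('m::finite,'d::finite) cpt2 \<Rightarrow> complex^'m \<Rightarrow> ('m,'d) cpt2" where
  "dLbarflow A v u =
     (fst v, fst (snd v) + u, snd (fst v) - \<i> *s (A *v flat3 (fst (snd v) + u, fst (fst v), snd (fst v))))"

lemma has_pt_cderiv_Lbarflow:
  assumes p: "has_pt_cderiv p v z" and u: "has_cderiv \<zeta> u z"
    and \<Theta>: "((\<lambda>(a, b, e). \<Theta> a b e) has_derivative (\<lambda>h. A *v flat3 h))
              (at (fst (snd (p z)) + \<zeta> z, fst (fst (p z)), snd (fst (p z))))"
  shows "has_pt_cderiv (\<lambda>c. Lbarflow \<Theta> (\<zeta> c) (p c)) (dLbarflow A v u) z"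
proof -
  have p1: "has_cderiv (\<lambda>c. fst (fst (p c))) (fst (fst v)) z"
    and p2: "has_cderiv (\<lambda>c. snd (fst (p c))) (snd (fst v)) z"
    and p3: "has_cderiv (\<lambda>c. fst (snd (p c))) (fst (snd v)) z"
    using p by (auto simp: has_pt_cderiv_def)
  have a: "has_cderiv (\<lambda>c. fst (snd (p c)) + \<zeta> c) (fst (snd v) + u) z"
    by (rule has_cderiv_add[OF p3 u])
  have "has_cderiv (\<lambda>c. \<Theta> (fst (snd (p c)) + \<zeta> c) (fst (fst (p c))) (snd (fst (p c))))
          (A *v flat3 (fst (snd v) + u, fst (fst v), snd (fst v))) z"
    using \<Theta> by (rule has_cderiv_compose3[OF _ a p1 p2])
  then have "has_cderiv
      (\<lambda>c. snd (fst (p c)) - \<i> *s \<Theta> (fst (snd (p c)) + \<zeta> c) (fst (fst (p c))) (snd (fst (p c))))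
      (snd (fst v) - \<i> *s (A *v flat3 (fst (snd v) + u, fst (fst v), snd (fst v)))) z"
    by (intro has_cderiv_diff[OF p2] has_cderiv_scale)
  then show ?thesis
    using a p1 p2 by (simp add: has_pt_cderiv_def Lbarflow_eq dLbarflow_def)
qed

(* (t, \<tau>) \<mapsto> (conj \<tau>, conj t), the antiholomorphic involution exchanging the two flows. *)
definition bar_swap :: "('m::finite,'d::finite) cpt2 \<Rightarrow> ('m,'d) cpt2" where
  "bar_swap p = ((cj (fst (snd p)), cj (snd (snd p))), (cj (fst (fst p)), cj (snd (fst p))))"

lemma bar_swap_bar_swap [simp]: "bar_swap (bar_swap p) = p"
  by (simp add: bar_swap_def)

lemma bar_swap_0 [simp]: "bar_swap 0 = 0"
  by (simp add: bar_swap_def zero_prod_def)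

lemma norm_bar_swap [simp]: "norm (bar_swap p) = norm p"
  by (simp add: bar_swap_def norm_prod_def add_ac)

lemma has_pt_cderiv_bar_swap:
  "has_pt_cderiv p v (cnj z) \<Longrightarrow> has_pt_cderiv (\<lambda>c. bar_swap (p (cnj c))) (bar_swap v) z"
  using has_cderiv_cnj[of "\<lambda>c. fst (fst (p c))"] has_cderiv_cnj[of "\<lambda>c. snd (fst (p c))"]
    has_cderiv_cnj[of "\<lambda>c. fst (snd (p c))"] has_cderiv_cnj[of "\<lambda>c. snd (snd (p c))"]
  by (simp add: has_pt_cderiv_def bar_swap_def)

(* Parameter tuples whose first n entries tend to 0: gen_rk F n is the largest rank attained
   frequently in this filter (gen_rk_eq_iff). *)
definition param_nhds :: "nat \<Rightarrow> (nat \<Rightarrow> complex^'m::finite) filter" where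
  "param_nhds n = (INF \<delta>\<in>{0<..}. principal {ws. \<forall>j\<in>{1..n}. norm (ws j) < \<delta>})"

lemma eventually_param_nhds:
  "eventually P (param_nhds n) \<longleftrightarrow> (\<exists>\<delta>>0. \<forall>ws. (\<forall>j\<in>{1..n}. norm (ws j) < \<delta>) \<longrightarrow> P ws)"
  unfolding param_nhds_def
proof (subst eventually_INF_base)
  show "\<exists>\<delta>\<in>{0<..}. principal {ws. \<forall>j\<in>{1..n}. norm (ws j) < \<delta>}
          \<le> inf (principal {ws. \<forall>j\<in>{1..n}. norm (ws j) < a}) (principal {ws. \<forall>j\<in>{1..n}. norm (ws j) < b})"
    if "a \<in> {0<..}" "b \<in> {0<..}" for a b :: real
    using that by (intro bexI[of _ "min a b"]) auto
qed (auto simp: eventually_principal)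

lemma frequently_param_nhds:
  "frequently P (param_nhds n) \<longleftrightarrow> (\<forall>\<delta>>0. \<exists>ws. (\<forall>j\<in>{1..n}. norm (ws j) < \<delta>) \<and> P ws)"
  unfolding frequently_def eventually_param_nhds by blast

lemma param_nhds_neq_bot [simp]: "param_nhds n \<noteq> bot"
  unfolding trivial_limit_def eventually_param_nhds by (auto intro!: exI[of _ "\<lambda>_. 0"])

lemma param_nhds_Suc_le: "param_nhds (Suc n) \<le> param_nhds n"
  by (rule filter_leI) (force simp: eventually_param_nhds)

lemma tendsto_param_nhds_Suc: "((\<lambda>ws. ws (Suc n)) \<longlongrightarrow> 0) (param_nhds (Suc n))"
  unfolding tendsto_iff eventually_param_nhds by force

lemma eventually_param_nhds_cj:
  "eventually (\<lambda>ws. P (\<lambda>j. cj (ws j))) (param_nhds n) \<longleftrightarrow> eventually P (param_nhds n)"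
proof -
  have *: "eventually (\<lambda>ws. Q (\<lambda>j. cj (ws j))) (param_nhds n)" if "eventually Q (param_nhds n)" for Q
    using that unfolding eventually_param_nhds by (metis norm_cj)
  show ?thesis using *[of P] *[of "\<lambda>ws. P (\<lambda>j. cj (ws j))"] by auto
qed

lemma frequently_param_nhds_cj:
  "frequently (\<lambda>ws. P (\<lambda>j. cj (ws j))) (param_nhds n) \<longleftrightarrow> frequently P (param_nhds n)"
  unfolding frequently_def using eventually_param_nhds_cj[of "\<lambda>ws. \<not> P ws"] by simp

lemma filterlim_param_nhds_cj: "filterlim (\<lambda>ws j. cj (ws j)) (param_nhds n) (param_nhds n)"
  unfolding filterlim_iff
proof (intro allI impI)
  fix P assume "eventually P (param_nhds n)"
  then show "eventually (\<lambda>ws. P (\<lambda>j. cj (ws j))) (param_nhds n)"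
    using eventually_param_nhds_cj[of P] by simp
qed

definition depends_on_first :: "nat \<Rightarrow> ((nat \<Rightarrow> 'a) \<Rightarrow> 'b) \<Rightarrow> bool" where
  "depends_on_first n f \<longleftrightarrow> (\<forall>ws ws'. (\<forall>j\<in>{1..n}. ws j = ws' j) \<longrightarrow> f ws = f ws')"

lemma depends_on_first_comp: "depends_on_first n G \<Longrightarrow> depends_on_first n (\<lambda>ws. f (G ws))"
  unfolding depends_on_first_def by metis

lemma depends_on_first_step:
  assumes "depends_on_first n G"
  shows "depends_on_first (Suc n) (\<lambda>ws. f (ws (Suc n)) (G ws))"
  unfolding depends_on_first_def
proof (intro allI impI)
  fix ws ws' :: "nat \<Rightarrow> 'a" assume eq: "\<forall>j\<in>{1..Suc n}. ws j = ws' j"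
  then have "G ws = G ws'" using assms by (simp add: depends_on_first_def)
  then show "f (ws (Suc n)) (G ws) = f (ws' (Suc n)) (G ws')" using eq by simp
qed

lemma frequently_param_nhds_Suc:
  assumes f: "depends_on_first n f" and P: "frequently (\<lambda>ws. P (f ws)) (param_nhds n)"
  shows "frequently (\<lambda>ws. P (f ws)) (param_nhds (Suc n))"
  unfolding frequently_param_nhds
proof (intro allI impI)
  fix \<delta> :: real assume "\<delta> > 0"
  then obtain ws where ws: "\<forall>j\<in>{1..n}. norm (ws j) < \<delta>" "P (f ws)"
    using P unfolding frequently_param_nhds by blast
  have "f (ws(Suc n := 0)) = f ws" using f by (simp add: depends_on_first_def)
  then show "\<exists>ws. (\<forall>j\<in>{1..Suc n}. norm (ws j) < \<delta>) \<and> P (f ws)"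
    using ws \<open>\<delta> > 0\<close> by (intro exI[of _ "ws(Suc n := 0)"]) (auto simp: le_Suc_eq)
qed

definition coord_line :: "(nat \<Rightarrow> complex^'m) \<Rightarrow> nat \<Rightarrow> 'm \<Rightarrow> complex \<Rightarrow> nat \<Rightarrow> complex^'m" where
  "coord_line ws j i c = ws(j := vupd (ws j) i c)"

lemma coord_line_self [simp]: "coord_line ws j i (ws j $ i) = ws"
  by (auto simp: coord_line_def vupd_def vec_eq_iff fun_eq_iff)

lemma cj_coord_line: "(\<lambda>l. cj (coord_line ws j i c l)) = coord_line (\<lambda>j. cj (ws j)) j i (cnj c)"
  by (auto simp: coord_line_def vupd_def vec_eq_iff)

lemma has_cderiv_coord_line: "has_cderiv (\<lambda>c. coord_line ws j i c k) (if j = k then axis i 1 else 0) z"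
  by (cases "j = k") (simp_all add: coord_line_def has_cderiv_vupd has_cderiv_const)

lemma jac_cols_coord_line:
  "jac_cols F k ws = {(\<chi> r. deriv (\<lambda>c. F (coord_line ws j i c) $ r) (ws j $ i)) | j i. j \<in> {1..k}}"
  unfolding jac_cols_def coord_line_def ..

lemma jac_cols_eqI:
  assumes "\<And>j i. j \<in> {1..k} \<Longrightarrow> has_cderiv (\<lambda>c. F (coord_line ws j i c)) (col j i) (ws j $ i)"
  shows "jac_cols F k ws = {col j i | j i. j \<in> {1..k}}"
  unfolding jac_cols_coord_line using has_cderiv_imp_deriv[OF assms] by metis

definition cdifferentiable_along_lines ::
  "((nat \<Rightarrow> complex^'m::finite) \<Rightarrow> complex^'r::finite) \<Rightarrow> (nat \<Rightarrow> complex^'m) \<Rightarrow> bool" where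
  "cdifferentiable_along_lines F ws \<longleftrightarrow>
     (\<forall>j i. \<exists>v. has_cderiv (\<lambda>c. F (coord_line ws j i c)) v (ws j $ i))"

lemma rank_at_le: "rank_at (F :: (nat \<Rightarrow> complex^'m::finite) \<Rightarrow> complex^'r::finite) k ws \<le> CARD('r)"
  unfolding rank_at_def using vec.dim_subset[of _ UNIV] vec.dim_UNIV card_cart_basis
  by (metis subset_UNIV)

lemma depends_on_first_rank_at:
  fixes F :: "(nat \<Rightarrow> complex^'m::finite) \<Rightarrow> complex^'r::finite"
  assumes "depends_on_first n F" shows "depends_on_first n (rank_at F n)"
  unfolding depends_on_first_def
proof (intro allI impI)
  fix ws ws' :: "nat \<Rightarrow> complex^'m" assume eq: "\<forall>j\<in>{1..n}. ws j = ws' j"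
  have "F (coord_line ws j i c) = F (coord_line ws' j i c)" if "j \<in> {1..n}" for j i c
    using assms eq that unfolding depends_on_first_def coord_line_def by simp
  then have "(\<chi> r. deriv (\<lambda>c. F (coord_line ws j i c) $ r) (ws j $ i))
      = (\<chi> r. deriv (\<lambda>c. F (coord_line ws' j i c) $ r) (ws' j $ i))" if "j \<in> {1..n}" for j i
    using eq that by simp
  then have "jac_cols F n ws = jac_cols F n ws'"
    unfolding jac_cols_coord_line by (auto; metis)
  then show "rank_at F n ws = rank_at F n ws'" by (simp add: rank_at_def)
qed

lemma gen_rk_eq_iff:
  fixes F :: "(nat \<Rightarrow> complex^'m::finite) \<Rightarrow> complex^'r::finite"
  shows "gen_rk F k = g \<longleftrightarrow>
    frequently (\<lambda>ws. g \<le> rank_at F k ws) (param_nhds k) \<and>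
    eventually (\<lambda>ws. rank_at F k ws \<le> g) (param_nhds k)"
proof -
  define R where "R r \<longleftrightarrow> frequently (\<lambda>ws. r \<le> rank_at F k ws) (param_nhds k)" for r
  have gen: "gen_rk F k = (GREATEST r. R r)"
    by (simp add: gen_rk_def R_def frequently_param_nhds)
  have ev: "eventually (\<lambda>ws. rank_at F k ws \<le> r) (param_nhds k) \<longleftrightarrow> \<not> R (Suc r)" for r
    by (simp add: R_def not_frequently not_less_eq_eq)
  have down: "R r'" if "R r" "r' \<le> r" for r r'
    using that unfolding R_def by (auto elim: frequently_elim1)
  have bound: "r \<le> CARD('r)" if "R r" for r
    using frequently_ex[OF that[unfolded R_def]] rank_at_le le_trans by blast
  show ?thesis
    unfolding gen ev R_def[symmetric]
  proof
    assume g: "(GREATEST r. R r) = g"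
    have "R 0" by (simp add: R_def)
    then have "R g" using GreatestI_nat[of R 0 "CARD('r)"] bound g by blast
    moreover have "\<not> R (Suc g)" using Greatest_le_nat[of R "Suc g" "CARD('r)"] bound g by auto
    ultimately show "R g \<and> \<not> R (Suc g)" ..
  next
    assume g: "R g \<and> \<not> R (Suc g)"
    show "(GREATEST r. R r) = g"
    proof (rule Greatest_equality)
      show "y \<le> g" if "R y" for y
        using g down[OF that, of "Suc g"] by (metis not_less_eq_eq)
    qed (use g in blast)
  qed
qed

lemma gen_rk_0: "gen_rk (F :: (nat \<Rightarrow> complex^'m::finite) \<Rightarrow> complex^'r::finite) 0 = 0"
proof -
  have "rank_at F 0 ws = 0" for ws by (simp add: rank_at_def jac_cols_def)
  then show ?thesis by (simp add: gen_rk_eq_iff)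
qed

lemma gen_rk_eqI:
  fixes F :: "(nat \<Rightarrow> complex^'m::finite) \<Rightarrow> complex^'r::finite"
  assumes rank: "eventually (\<lambda>ws. rank_at F k ws = c + h ws) (param_nhds k)"
    and "frequently (\<lambda>ws. g \<le> h ws) (param_nhds k)" "eventually (\<lambda>ws. h ws \<le> g) (param_nhds k)"
  shows "gen_rk F k = c + g"
  unfolding gen_rk_eq_iff using assms(2,3)
  by (auto elim!: frequently_rev_mp eventually_mono[OF eventually_conj[OF _ rank]]
      intro: eventually_mono[OF rank])

lemma gen_rk_Suc_eq_add:
  fixes F1 :: "(nat \<Rightarrow> complex^'m::finite) \<Rightarrow> complex^'a::finite"
    and F2 :: "(nat \<Rightarrow> complex^'m) \<Rightarrow> complex^'b::finite"
  assumes F2: "depends_on_first n F2"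
    and rank: "eventually (\<lambda>ws. rank_at F1 (Suc n) ws = c + rank_at F2 n ws) (param_nhds (Suc n))"
  shows "gen_rk F1 (Suc n) = c + gen_rk F2 n"
proof (rule gen_rk_eqI[OF rank])
  have "frequently (\<lambda>ws. gen_rk F2 n \<le> rank_at F2 n ws) (param_nhds n)"
    and ev: "eventually (\<lambda>ws. rank_at F2 n ws \<le> gen_rk F2 n) (param_nhds n)"
    using gen_rk_eq_iff by blast+
  then show "frequently (\<lambda>ws. gen_rk F2 n \<le> rank_at F2 n ws) (param_nhds (Suc n))"
    using frequently_param_nhds_Suc[OF depends_on_first_rank_at[OF F2]] by blast
  show "eventually (\<lambda>ws. rank_at F2 n ws \<le> gen_rk F2 n) (param_nhds (Suc n))"
    using ev param_nhds_Suc_le filter_leD by blast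
qed

lemma image_setcompr2: "g ` {f j i | j i. j \<in> A} = {g (f j i) | j i. j \<in> A}"
  by blast

lemma setcompr_Suc: "{f j i | j i. j \<in> {1..Suc n}} = {f j i | j i. j \<in> {1..n}} \<union> range (f (Suc n))"
  by (auto simp: le_Suc_eq)

(* coord makes L commute with deriv of components even where these are not differentiable and
   deriv is an unspecified value. *)
lemma rank_at_coordinate_map:
  fixes L :: "complex^'a::finite \<Rightarrow> complex^'b::finite"
  assumes L: "clin L" "inj L" and coord: "\<And>s. (\<exists>r. \<forall>v. L v $ s = v $ r) \<or> (\<forall>v. L v $ s = 0)"
  shows "rank_at (\<lambda>ws. L (F ws)) k ws = rank_at F k ws"
proof -
  have col: "(\<chi> s. deriv (\<lambda>c. L (f c) $ s) z) = L (\<chi> r. deriv (\<lambda>c. f c $ r) z)" for f z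
  proof -
    have "deriv (\<lambda>c. L (f c) $ s) z = L (\<chi> r. deriv (\<lambda>c. f c $ r) z) $ s" for s
      using coord[of s] by auto
    then show ?thesis by (simp add: vec_eq_iff)
  qed
  have "jac_cols (\<lambda>ws. L (F ws)) k ws = L ` jac_cols F k ws"
    unfolding jac_cols_def col by blast
  then show ?thesis
    unfolding rank_at_def using L by (simp add: vec.dim_image_eq inj_on_subset)
qed

definition swap_halves :: "complex^('a::finite + 'a) \<Rightarrow> complex^('a + 'a)" where
  "swap_halves v = (\<chi> s. v $ (case s of Inl a \<Rightarrow> Inr a | Inr a \<Rightarrow> Inl a))"

lemma rank_at_swap_halves:
  fixes F :: "(nat \<Rightarrow> complex^'m::finite) \<Rightarrow> complex^('a::finite + 'a)"
  shows "rank_at (\<lambda>ws. swap_halves (F ws)) k ws = rank_at F k ws"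
proof (rule rank_at_coordinate_map)
  have "swap_halves (swap_halves v) = v" for v :: "complex^('a + 'a)"
    by (simp add: swap_halves_def vec_eq_iff split: sum.split)
  then show "inj (swap_halves :: complex^('a + 'a) \<Rightarrow> _)" by (metis injI)
  show "clin (swap_halves :: complex^('a + 'a) \<Rightarrow> _)"
    by (rule clinI) (simp_all add: swap_halves_def vec_eq_iff)
qed (auto simp: swap_halves_def)

definition embed_left :: "complex^'a::finite \<Rightarrow> complex^('a + 'b::finite)" where
  "embed_left u = (\<chi> s. case s of Inl a \<Rightarrow> u $ a | Inr b \<Rightarrow> 0)"

lemma rank_at_embed_left:
  fixes F :: "(nat \<Rightarrow> complex^'m::finite) \<Rightarrow> complex^'a::finite"
  shows "rank_at (\<lambda>ws. (embed_left (F ws) :: complex^('a + 'b::finite))) k ws = rank_at F k ws"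
proof (rule rank_at_coordinate_map)
  show "clin (embed_left :: complex^'a \<Rightarrow> complex^('a + 'b))"
    by (rule clinI) (auto simp: embed_left_def vec_eq_iff split: sum.split)
  show "inj (embed_left :: complex^'a \<Rightarrow> complex^('a + 'b))"
    by (rule injI) (metis (no_types, lifting) embed_left_def vec_eq_iff vec_lambda_beta sum.simps(5))
qed (auto simp: embed_left_def split: sum.split)

lemma rank_at_conj:
  fixes F :: "(nat \<Rightarrow> complex^'m::finite) \<Rightarrow> complex^'r::finite"
  assumes "cdifferentiable_along_lines F (\<lambda>j. cj (ws j))"
  shows "rank_at (\<lambda>ws. cj (F (\<lambda>j. cj (ws j)))) k ws = rank_at F k (\<lambda>j. cj (ws j))"
proof -
  define cws where "cws = (\<lambda>j. cj (ws j))"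
  have col: "(\<chi> r. deriv (\<lambda>c. cj (F (\<lambda>l. cj (coord_line ws j i c l))) $ r) (ws j $ i))
      = cj (\<chi> r. deriv (\<lambda>c. F (coord_line cws j i c) $ r) (cws j $ i))" for j i
  proof -
    obtain v where v: "has_cderiv (\<lambda>c. F (coord_line cws j i c)) v (cws j $ i)"
      using assms by (auto simp: cdifferentiable_along_lines_def cws_def)
    have "cws j $ i = cnj (ws j $ i)" by (simp add: cws_def cj_def)
    moreover have "(\<lambda>l. cj (coord_line ws j i c l)) = coord_line cws j i (cnj c)" for c
      unfolding cws_def by (rule cj_coord_line)
    ultimately have "has_cderiv (\<lambda>c. cj (F (\<lambda>l. cj (coord_line ws j i c l)))) (cj v) (ws j $ i)"
      using has_cderiv_cnj[of "\<lambda>c. F (coord_line cws j i c)" v "ws j $ i"] v by simp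
    from has_cderiv_imp_deriv[OF this] has_cderiv_imp_deriv[OF v] show ?thesis by simp
  qed
  have "jac_cols (\<lambda>ws. cj (F (\<lambda>j. cj (ws j)))) k ws = cj ` jac_cols F k cws"
    unfolding jac_cols_coord_line col image_setcompr2 by (simp only: cws_def)
  then have "rank_at (\<lambda>ws. cj (F (\<lambda>j. cj (ws j)))) k ws = vec.dim (cj ` jac_cols F k cws)"
    unfolding rank_at_def by (rule arg_cong)
  also have "\<dots> = rank_at F k cws" unfolding rank_at_def by (rule dim_cj)
  finally show ?thesis unfolding cws_def .
qed

lemma gen_rk_conj:
  fixes F :: "(nat \<Rightarrow> complex^'m::finite) \<Rightarrow> complex^'r::finite"
  assumes "eventually (cdifferentiable_along_lines F) (param_nhds k)"
  shows "gen_rk (\<lambda>ws. cj (F (\<lambda>j. cj (ws j)))) k = gen_rk F k"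
proof -
  have "eventually (\<lambda>ws. cdifferentiable_along_lines F (\<lambda>j. cj (ws j))) (param_nhds k)"
    using assms eventually_param_nhds_cj[of "cdifferentiable_along_lines F"] by blast
  then have rank: "eventually (\<lambda>ws. rank_at (\<lambda>ws. cj (F (\<lambda>j. cj (ws j)))) k ws
      = 0 + rank_at F k (\<lambda>j. cj (ws j))) (param_nhds k)"
    by (rule eventually_mono) (simp add: rank_at_conj)
  have "frequently (\<lambda>ws. gen_rk F k \<le> rank_at F k ws) (param_nhds k)"
    and "eventually (\<lambda>ws. rank_at F k ws \<le> gen_rk F k) (param_nhds k)"
    using gen_rk_eq_iff by blast+
  then have "frequently (\<lambda>ws. gen_rk F k \<le> rank_at F k (\<lambda>j. cj (ws j))) (param_nhds k)"
    and "eventually (\<lambda>ws. rank_at F k (\<lambda>j. cj (ws j)) \<le> gen_rk F k) (param_nhds k)"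
    using frequently_param_nhds_cj[of "\<lambda>ws. gen_rk F k \<le> rank_at F k ws"]
      eventually_param_nhds_cj[of "\<lambda>ws. rank_at F k ws \<le> gen_rk F k"] by blast+
  from gen_rk_eqI[OF rank this] show ?thesis by simp
qed

section \<open>One step of a Segre chain\<close>

definition regular_germ :: "nat \<Rightarrow> ((nat \<Rightarrow> complex^'m::finite) \<Rightarrow> ('m,'d::finite) cpt2) \<Rightarrow> bool" where
  "regular_germ n G \<longleftrightarrow> depends_on_first n G \<and> (G \<longlongrightarrow> 0) (param_nhds n) \<and>
     eventually (\<lambda>ws. \<forall>j i. \<exists>v. has_pt_cderiv (\<lambda>c. G (coord_line ws j i c)) v (ws j $ i)) (param_nhds n)"

lemma regular_germ_0: "regular_germ 0 (\<lambda>ws. 0)"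
  unfolding regular_germ_def depends_on_first_def
  by (intro conjI always_eventually allI exI[of _ 0] has_pt_cderiv_const) auto

lemma obtain_line_derivatives:
  assumes dep: "depends_on_first n G"
    and diff: "\<forall>j i. \<exists>v. has_pt_cderiv (\<lambda>c. G (coord_line ws j i c)) v (ws j $ i)"
  obtains V where "\<And>j i. has_pt_cderiv (\<lambda>c. G (coord_line ws j i c)) (V j i) (ws j $ i)"
    and "\<And>j i. j \<notin> {1..n} \<Longrightarrow> V j i = 0"
proof
  define V where "V j i = (if j \<in> {1..n}
      then SOME v. has_pt_cderiv (\<lambda>c. G (coord_line ws j i c)) v (ws j $ i) else 0)" for j i
  show V0: "V j i = 0" if "j \<notin> {1..n}" for j i using that unfolding V_def by auto
  show "has_pt_cderiv (\<lambda>c. G (coord_line ws j i c)) (V j i) (ws j $ i)" for j i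
  proof (cases "j \<in> {1..n}")
    case True
    then show ?thesis using someI_ex[OF diff[rule_format, of j i]] by (simp add: V_def)
  next
    case False
    then have "(\<lambda>c. G (coord_line ws j i c)) = (\<lambda>c. G ws)"
      using dep by (auto simp: depends_on_first_def coord_line_def)
    then show ?thesis unfolding V0[OF False] by (simp add: has_pt_cderiv_const)
  qed
qed

definition coord_w :: "complex^(('m::finite+'d::finite)+('m+'d)) \<Rightarrow> complex^'m" where
  "coord_w v = (\<chi> i. v $ Inl (Inl i))"

definition coord_z :: "complex^(('m::finite+'d::finite)+('m+'d)) \<Rightarrow> complex^'d" where
  "coord_z v = (\<chi> i. v $ Inl (Inr i))"

definition coord_zeta :: "complex^(('m::finite+'d::finite)+('m+'d)) \<Rightarrow> complex^'m" where
  "coord_zeta v = (\<chi> i. v $ Inr (Inl i))"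

definition coord_xi :: "complex^(('m::finite+'d::finite)+('m+'d)) \<Rightarrow> complex^'d" where
  "coord_xi v = (\<chi> i. v $ Inr (Inr i))"

definition coord_t :: "complex^(('m::finite+'d::finite)+('m+'d)) \<Rightarrow> complex^('m+'d)" where
  "coord_t v = (\<chi> i. v $ Inl i)"

lemma coord_flat_pt [simp]:
  "coord_w (flat_pt p) = fst (fst p)" "coord_z (flat_pt p) = snd (fst p)"
  "coord_zeta (flat_pt p) = fst (snd p)" "coord_xi (flat_pt p) = snd (snd p)"
  "coord_t (flat_pt p) = flat_t (fst p)"
  by (simp_all add: coord_w_def coord_z_def coord_zeta_def coord_xi_def coord_t_def flat_pt_def
      flat_t_def vec_eq_iff)

lemma clin_coord: "clin coord_w" "clin coord_z" "clin coord_zeta" "clin coord_xi" "clin coord_t"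
  by (auto intro!: clinI simp: coord_w_def coord_z_def coord_zeta_def coord_xi_def coord_t_def vec_eq_iff)

lemma coord_t_eq_0: "coord_t v = 0 \<longleftrightarrow> coord_w v = 0 \<and> coord_z v = 0"
  by (auto simp: coord_t_def coord_w_def coord_z_def vec_eq_iff; metis sum.exhaust)

lemma coord_eq_0:
  "coord_w v = 0 \<Longrightarrow> coord_z v = 0 \<Longrightarrow> coord_zeta v = 0 \<Longrightarrow> coord_xi v = 0 \<Longrightarrow> v = 0"
  by (auto simp: coord_w_def coord_z_def coord_zeta_def coord_xi_def vec_eq_iff split: sum.split)
    (metis sum.exhaust)

lemma subspace_dLbarflow:
  "vec.subspace {v. coord_xi v = coord_z v - \<i> *s (A *v flat3 (coord_zeta v, coord_w v, coord_z v))}"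
  unfolding vec.subspace_def
  by (auto simp: vec.linear_add[OF clin_coord(1)] vec.linear_add[OF clin_coord(2)]
      vec.linear_add[OF clin_coord(3)] vec.linear_add[OF clin_coord(4)]
      vec.linear_scale[OF clin_coord(1)] vec.linear_scale[OF clin_coord(2)]
      vec.linear_scale[OF clin_coord(3)] vec.linear_scale[OF clin_coord(4)]
      vec.linear_0[OF clin_coord(1)] vec.linear_0[OF clin_coord(2)]
      vec.linear_0[OF clin_coord(3)] vec.linear_0[OF clin_coord(4)]
      flat3_add flat3_scale matrix_vector_right_distrib vector_add_ldistrib vec.scale
      vector_ssub_ldistrib vector_smult_assoc mult.commute)

lemma has_pt_cderiv_Lbarflow_step:
  assumes G: "has_pt_cderiv (\<lambda>c. G (coord_line ws j i c)) v (ws j $ i)"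
    and \<Theta>: "((\<lambda>(a, b, e). \<Theta> a b e) has_derivative (\<lambda>h. A *v flat3 h))
              (at (fst (snd (G ws)) + ws (Suc n), fst (fst (G ws)), snd (fst (G ws))))"
  shows "has_pt_cderiv (\<lambda>c. Lbarflow \<Theta> (coord_line ws j i c (Suc n)) (G (coord_line ws j i c)))
           (dLbarflow A v (if j = Suc n then axis i 1 else 0)) (ws j $ i)"
  using \<Theta> by (intro has_pt_cderiv_Lbarflow[OF G has_cderiv_coord_line]) simp

lemma flat_t_0 [simp]: "flat_t 0 = 0"
  by (simp add: flat_t_def vec_eq_iff split: sum.split)

lemma rank_at_Lbarflow_step:
  fixes G :: "(nat \<Rightarrow> complex^'m::finite) \<Rightarrow> ('m,'d::finite) cpt2"
  assumes dep: "depends_on_first n G"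
    and diff: "\<forall>j i. \<exists>v. has_pt_cderiv (\<lambda>c. G (coord_line ws j i c)) v (ws j $ i)"
    and \<Theta>: "((\<lambda>(a, b, e). \<Theta> a b e) has_derivative (\<lambda>h. A *v flat3 h))
              (at (fst (snd (G ws)) + ws (Suc n), fst (fst (G ws)), snd (fst (G ws))))"
  shows "rank_at (\<lambda>ws. flat_pt (Lbarflow \<Theta> (ws (Suc n)) (G ws))) (Suc n) ws
           = CARD('m) + rank_at (\<lambda>ws. flat_t (fst (G ws))) n ws"
proof -
  obtain V where V: "\<And>j i. has_pt_cderiv (\<lambda>c. G (coord_line ws j i c)) (V j i) (ws j $ i)"
    and V0: "\<And>j i. j \<notin> {1..n} \<Longrightarrow> V j i = 0"
    using obtain_line_derivatives[OF dep diff] by blast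
  define col where "col j i = flat_pt (dLbarflow A (V j i) (if j = Suc n then axis i 1 else 0))"
    for j i
  define C where "C = {col j i | j i. j \<in> {1..n}}"
  have "jac_cols (\<lambda>ws. flat_pt (Lbarflow \<Theta> (ws (Suc n)) (G ws))) (Suc n) ws
      = {col j i | j i. j \<in> {1..Suc n}}"
    unfolding col_def using \<Theta>
    by (intro jac_cols_eqI has_pt_cderiv_flat(1) has_pt_cderiv_Lbarflow_step[OF V]) (simp add: coord_line_def)
  also have "\<dots> = C \<union> range (col (Suc n))" unfolding C_def by (rule setcompr_Suc)
  finally have J1: "jac_cols (\<lambda>ws. flat_pt (Lbarflow \<Theta> (ws (Suc n)) (G ws))) (Suc n) ws
      = C \<union> range (col (Suc n))" .
  have "jac_cols (\<lambda>ws. flat_t (fst (G ws))) n ws = {flat_t (fst (V j i)) | j i. j \<in> {1..n}}"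
    by (intro jac_cols_eqI has_pt_cderiv_flat(2)[OF V])
  also have "\<dots> = coord_t ` C"
    unfolding C_def image_setcompr2 by (simp add: col_def dLbarflow_def)
  finally have J2: "jac_cols (\<lambda>ws. flat_t (fst (G ws))) n ws = coord_t ` C" .
  define S where "S = {v. coord_xi v = coord_z v - \<i> *s (A *v flat3 (coord_zeta v, coord_w v, coord_z v))}"
  have "vec.dim (C \<union> range (col (Suc n))) = CARD('m) + vec.dim (coord_t ` C)"
  proof (rule dim_Un_kernel_basis[OF clin_coord(5) clin_coord(3)])
    show "vec.subspace S" unfolding S_def by (rule subspace_dLbarflow)
    have "col j i \<in> S" for j i by (simp add: S_def col_def dLbarflow_def)
    then show "C \<subseteq> S" "range (col (Suc n)) \<subseteq> S" unfolding C_def by blast+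
    show "coord_t (col (Suc n) i) = 0" "coord_zeta (col (Suc n) i) = axis i 1" for i
      by (simp_all add: col_def dLbarflow_def V0)
    show "v = 0" if "v \<in> S" "coord_t v = 0" "coord_zeta v = 0" for v
      using that by (auto simp: S_def coord_t_eq_0 intro: coord_eq_0)
  qed
  then show ?thesis using J1 J2 by (simp add: rank_at_def)
qed

lemma continuous_flat3:
  "continuous_on UNIV (flat3 :: (complex^'m::finite) \<times> (complex^'m) \<times> (complex^'d::finite) \<Rightarrow> _)"
  unfolding flat3_def
proof (intro continuous_on_vec_lambda)
  fix s :: "('m+'m)+'d"
  consider i where "s = Inl (Inl i)" | i where "s = Inl (Inr i)" | j where "s = Inr j"
    by (metis sum.exhaust)
  then show "continuous_on UNIV (\<lambda>x. case s of Inl (Inl i) \<Rightarrow> fst x $ i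
      | Inl (Inr i) \<Rightarrow> fst (snd x) $ i | Inr j \<Rightarrow> snd (snd x) $ j)"
    by cases (auto intro!: continuous_intros)
qed

lemma tendsto_scale_vec:
  fixes f :: "'a \<Rightarrow> complex^'n::finite"
  assumes "(f \<longlongrightarrow> a) F" shows "((\<lambda>x. k *s f x) \<longlongrightarrow> k *s a) F"
proof (rule vec_tendstoI)
  fix i show "((\<lambda>x. (k *s f x) $ i) \<longlongrightarrow> (k *s a) $ i) F"
    using tendsto_mult_left[OF tendsto_vec_nth[OF assms, of i], of k] by simp
qed

lemma tendsto_cpt2_parts:
  fixes G :: "'a \<Rightarrow> ('m::finite,'d::finite) cpt2"
  assumes "(G \<longlongrightarrow> 0) F"
  shows "((\<lambda>x. fst (fst (G x))) \<longlongrightarrow> 0) F" "((\<lambda>x. snd (fst (G x))) \<longlongrightarrow> 0) F"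
    "((\<lambda>x. fst (snd (G x))) \<longlongrightarrow> 0) F" "((\<lambda>x. snd (snd (G x))) \<longlongrightarrow> 0) F"
  using tendsto_fst[OF tendsto_fst[OF assms]] tendsto_snd[OF tendsto_fst[OF assms]]
    tendsto_fst[OF tendsto_snd[OF assms]] tendsto_snd[OF tendsto_snd[OF assms]]
  by simp_all

locale holomorphic_germ =
  fixes \<Theta> :: "complex^'m::finite \<Rightarrow> complex^'m \<Rightarrow> complex^'d::finite \<Rightarrow> complex^'d"
  assumes holomorphic: "holomorphic_near_0 \<Theta>" and vanishes: "\<Theta> 0 0 0 = 0"
begin

lemma eventually_has_derivative:
  "eventually (\<lambda>x. \<exists>A. ((\<lambda>(a, b, e). \<Theta> a b e) has_derivative (\<lambda>h. A *v flat3 h)) (at x)) (nhds 0)"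
proof -
  obtain U where U: "open U" "0 \<in> U" and H: "\<And>x. flat3 x \<in> U \<Longrightarrow>
      \<exists>A. ((\<lambda>y. \<Theta> (fst y) (fst (snd y)) (snd (snd y))) has_derivative (\<lambda>h. A *v flat3 h)) (at x)"
    using holomorphic unfolding holomorphic_near_0_def by blast
  have "open (flat3 -` U)" by (rule open_vimage[OF U(1) continuous_flat3])
  moreover have "0 \<in> flat3 -` U" using U(2) by (simp add: zero_prod_def)
  moreover have "(\<lambda>(a, b, e). \<Theta> a b e) = (\<lambda>y. \<Theta> (fst y) (fst (snd y)) (snd (snd y)))"
    by (rule ext) (simp split: prod.split)
  ultimately show ?thesis
    unfolding eventually_nhds using H by (intro exI[of _ "flat3 -` U"]) simp
qed

lemma tendsto_Theta:
  assumes "((\<lambda>x. (f x, g x, h x)) \<longlongrightarrow> 0) F"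
  shows "((\<lambda>x. \<Theta> (f x) (g x) (h x)) \<longlongrightarrow> 0) F"
proof -
  obtain A where "((\<lambda>(a, b, e). \<Theta> a b e) has_derivative (\<lambda>h. A *v flat3 h)) (at 0)"
    using eventually_nhds_x_imp_x[OF eventually_has_derivative] by blast
  then have "isCont (\<lambda>(a, b, e). \<Theta> a b e) 0" by (rule has_derivative_continuous)
  from isCont_tendsto_compose[OF this assms] show ?thesis by (simp add: vanishes zero_prod_def)
qed

lemma tendsto_Lbarflow_point:
  assumes "regular_germ n G"
  shows "((\<lambda>ws. (fst (snd (G ws)) + ws (Suc n), fst (fst (G ws)), snd (fst (G ws)))) \<longlongrightarrow> 0)
           (param_nhds (Suc n))"
proof -
  have "(G \<longlongrightarrow> 0) (param_nhds (Suc n))"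
    using assms param_nhds_Suc_le by (auto simp: regular_germ_def intro: tendsto_mono)
  note G0 = tendsto_cpt2_parts[OF this]
  have "((\<lambda>ws. (fst (snd (G ws)) + ws (Suc n), fst (fst (G ws)), snd (fst (G ws))))
      \<longlongrightarrow> (0 + 0, 0, 0)) (param_nhds (Suc n))"
    by (intro tendsto_Pair tendsto_add G0 tendsto_param_nhds_Suc)
  then show ?thesis by (simp add: zero_prod_def)
qed

lemma eventually_has_derivative_Lbarflow_step:
  assumes "regular_germ n G"
  shows "eventually (\<lambda>ws. \<exists>A. ((\<lambda>(a, b, e). \<Theta> a b e) has_derivative (\<lambda>h. A *v flat3 h))
           (at (fst (snd (G ws)) + ws (Suc n), fst (fst (G ws)), snd (fst (G ws))))) (param_nhds (Suc n))"
  using tendsto_Lbarflow_point[OF assms] eventually_has_derivative by (auto simp: filterlim_iff)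

lemma regular_germ_Lbarflow_step:
  assumes G: "regular_germ n G"
  shows "regular_germ (Suc n) (\<lambda>ws. Lbarflow \<Theta> (ws (Suc n)) (G ws))"
proof -
  have dep: "depends_on_first n G"
    and G0: "(G \<longlongrightarrow> 0) (param_nhds (Suc n))"
    and diff: "eventually (\<lambda>ws. \<forall>j i. \<exists>v. has_pt_cderiv (\<lambda>c. G (coord_line ws j i c)) v (ws j $ i))
      (param_nhds (Suc n))"
    using G param_nhds_Suc_le by (auto simp: regular_germ_def intro: tendsto_mono filter_leD)
  have "depends_on_first (Suc n) (\<lambda>ws. Lbarflow \<Theta> (ws (Suc n)) (G ws))"
    using dep by (rule depends_on_first_step)
  moreover have "((\<lambda>ws. Lbarflow \<Theta> (ws (Suc n)) (G ws)) \<longlongrightarrow> 0) (param_nhds (Suc n))"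
  proof -
    note parts = tendsto_cpt2_parts[OF G0]
    have "((\<lambda>ws. \<Theta> (fst (snd (G ws)) + ws (Suc n)) (fst (fst (G ws))) (snd (fst (G ws)))) \<longlongrightarrow> 0)
        (param_nhds (Suc n))"
      by (rule tendsto_Theta[OF tendsto_Lbarflow_point[OF G]])
    from tendsto_Pair[OF tendsto_fst[OF G0] tendsto_Pair[OF tendsto_add[OF parts(3) tendsto_param_nhds_Suc]
        tendsto_diff[OF parts(2) tendsto_scale_vec[where k = \<i>, OF this]]]]
    show ?thesis by (simp add: Lbarflow_eq zero_prod_def)
  qed
  moreover have "eventually (\<lambda>ws. \<forall>j i. \<exists>v. has_pt_cderiv
      (\<lambda>c. Lbarflow \<Theta> (coord_line ws j i c (Suc n)) (G (coord_line ws j i c))) v (ws j $ i))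
      (param_nhds (Suc n))"
    using eventually_has_derivative_Lbarflow_step[OF G] diff
  proof eventually_elim
    case (elim ws)
    then obtain A where A: "((\<lambda>(a, b, e). \<Theta> a b e) has_derivative (\<lambda>h. A *v flat3 h))
        (at (fst (snd (G ws)) + ws (Suc n), fst (fst (G ws)), snd (fst (G ws))))" by blast
    show ?case
    proof (intro allI)
      fix j i
      obtain v where "has_pt_cderiv (\<lambda>c. G (coord_line ws j i c)) v (ws j $ i)" using elim(2) by blast
      from has_pt_cderiv_Lbarflow_step[OF this A] show "\<exists>v. has_pt_cderiv
          (\<lambda>c. Lbarflow \<Theta> (coord_line ws j i c (Suc n)) (G (coord_line ws j i c))) v (ws j $ i)" ..
    qed
  qed
  ultimately show ?thesis by (simp add: regular_germ_def)
qed

lemma gen_rk_Lbarflow_step: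
  assumes G: "regular_germ n G"
  shows "gen_rk (\<lambda>ws. flat_pt (Lbarflow \<Theta> (ws (Suc n)) (G ws))) (Suc n)
           = CARD('m) + gen_rk (\<lambda>ws. flat_t (fst (G ws))) n"
proof (rule gen_rk_Suc_eq_add)
  have dep: "depends_on_first n G" using G by (simp add: regular_germ_def)
  then show "depends_on_first n (\<lambda>ws. flat_t (fst (G ws)))"
    by (rule depends_on_first_comp)
  have "eventually (\<lambda>ws. \<forall>j i. \<exists>v. has_pt_cderiv (\<lambda>c. G (coord_line ws j i c)) v (ws j $ i))
      (param_nhds (Suc n))"
    using G param_nhds_Suc_le by (auto simp: regular_germ_def intro: filter_leD)
  with eventually_has_derivative_Lbarflow_step[OF G]
  show "eventually (\<lambda>ws. rank_at (\<lambda>ws. flat_pt (Lbarflow \<Theta> (ws (Suc n)) (G ws))) (Suc n) ws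
      = CARD('m) + rank_at (\<lambda>ws. flat_t (fst (G ws))) n ws) (param_nhds (Suc n))"
    by eventually_elim (use rank_at_Lbarflow_step[OF dep] in blast)
qed

end

section \<open>Conjugation\<close>

definition conj_germ ::
  "((nat \<Rightarrow> complex^'m::finite) \<Rightarrow> ('m,'d::finite) cpt2) \<Rightarrow> (nat \<Rightarrow> complex^'m) \<Rightarrow> ('m,'d) cpt2"
where
  "conj_germ G ws = bar_swap (G (\<lambda>j. cj (ws j)))"

lemma depends_on_first_conj_germ:
  fixes G :: "(nat \<Rightarrow> complex^'m::finite) \<Rightarrow> ('m,'d::finite) cpt2"
  assumes "depends_on_first n G" shows "depends_on_first n (conj_germ G)"
  unfolding depends_on_first_def
proof (intro allI impI)
  fix ws ws' :: "nat \<Rightarrow> complex^'m" assume "\<forall>j\<in>{1..n}. ws j = ws' j"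
  then have "G (\<lambda>j. cj (ws j)) = G (\<lambda>j. cj (ws' j))"
    using assms unfolding depends_on_first_def by simp
  then show "conj_germ G ws = conj_germ G ws'" by (simp add: conj_germ_def)
qed

lemma tendsto_conj_germ:
  assumes "(G \<longlongrightarrow> 0) (param_nhds n)" shows "(conj_germ G \<longlongrightarrow> 0) (param_nhds n)"
proof -
  from tendsto_norm_zero[OF filterlim_compose[OF assms filterlim_param_nhds_cj]]
  have "((\<lambda>ws. norm (conj_germ G ws)) \<longlongrightarrow> 0) (param_nhds n)" by (simp add: conj_germ_def)
  then show ?thesis by (rule tendsto_norm_zero_cancel)
qed

lemma has_pt_cderiv_conj_germ:
  assumes "has_pt_cderiv (\<lambda>c. G (coord_line (\<lambda>j. cj (ws j)) j i c)) v (cnj (ws j $ i))"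
  shows "has_pt_cderiv (\<lambda>c. conj_germ G (coord_line ws j i c)) (bar_swap v) (ws j $ i)"
  using has_pt_cderiv_bar_swap[OF assms] unfolding conj_germ_def cj_coord_line .

lemma regular_germ_conj_germ:
  assumes G: "regular_germ n G" shows "regular_germ n (conj_germ G)"
proof -
  have dep: "depends_on_first n G" and G0: "(G \<longlongrightarrow> 0) (param_nhds n)"
    using G by (simp_all add: regular_germ_def)
  have "eventually (\<lambda>ws. \<forall>j i. \<exists>v. has_pt_cderiv (\<lambda>c. G (coord_line (\<lambda>j. cj (ws j)) j i c)) v
      (cnj (ws j $ i))) (param_nhds n)"
    using G eventually_param_nhds_cj[where P = "\<lambda>ws. \<forall>j i. \<exists>v. has_pt_cderiv
      (\<lambda>c. G (coord_line ws j i c)) v (ws j $ i)"] by (simp add: regular_germ_def)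
  then have "eventually (\<lambda>ws. \<forall>j i. \<exists>v. has_pt_cderiv (\<lambda>c. conj_germ G (coord_line ws j i c)) v
      (ws j $ i)) (param_nhds n)"
    by (rule eventually_mono) (blast intro: has_pt_cderiv_conj_germ)
  with depends_on_first_conj_germ[OF dep] tendsto_conj_germ[OF G0] show ?thesis
    by (simp add: regular_germ_def)
qed

lemma flat_bar_swap:
  "flat_pt (bar_swap p) = swap_halves (cj (flat_pt p))"
  "flat_t (fst (bar_swap p)) = cj (flat_t (snd p))"
  "flat_t (snd (bar_swap p)) = cj (flat_t (fst p))"
  by (simp_all add: bar_swap_def swap_halves_def flat_pt_def flat_t_def vec_eq_iff split: sum.split)

lemma regular_germ_cdifferentiable:
  assumes "regular_germ n G"
  shows "eventually (cdifferentiable_along_lines (\<lambda>ws. flat_pt (G ws))) (param_nhds n)"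
    and "eventually (cdifferentiable_along_lines (\<lambda>ws. flat_t (fst (G ws)))) (param_nhds n)"
    and "eventually (cdifferentiable_along_lines (\<lambda>ws. flat_t (snd (G ws)))) (param_nhds n)"
proof -
  have "eventually (\<lambda>ws. \<forall>j i. \<exists>v. has_pt_cderiv (\<lambda>c. G (coord_line ws j i c)) v (ws j $ i))
      (param_nhds n)"
    using assms by (simp add: regular_germ_def)
  then show "eventually (cdifferentiable_along_lines (\<lambda>ws. flat_pt (G ws))) (param_nhds n)"
    and "eventually (cdifferentiable_along_lines (\<lambda>ws. flat_t (fst (G ws)))) (param_nhds n)"
    and "eventually (cdifferentiable_along_lines (\<lambda>ws. flat_t (snd (G ws)))) (param_nhds n)"
    unfolding cdifferentiable_along_lines_def by (eventually_elim, blast dest: has_pt_cderiv_flat)+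
qed

lemma gen_rk_conj_germ:
  assumes "regular_germ n G"
  shows "gen_rk (\<lambda>ws. flat_pt (conj_germ G ws)) n = gen_rk (\<lambda>ws. flat_pt (G ws)) n"
    and "gen_rk (\<lambda>ws. flat_t (fst (conj_germ G ws))) n = gen_rk (\<lambda>ws. flat_t (snd (G ws))) n"
    and "gen_rk (\<lambda>ws. flat_t (snd (conj_germ G ws))) n = gen_rk (\<lambda>ws. flat_t (fst (G ws))) n"
  using gen_rk_conj[OF regular_germ_cdifferentiable(1)[OF assms]]
    gen_rk_conj[OF regular_germ_cdifferentiable(2)[OF assms]]
    gen_rk_conj[OF regular_germ_cdifferentiable(3)[OF assms]]
  by (simp_all add: conj_germ_def flat_bar_swap gen_rk_def rank_at_swap_halves)

lemma Lflow_eq: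
  "Lflow \<Theta> w p = ((fst (fst p) + w,
     snd (snd p) + \<i> *s Theta_bar \<Theta> (fst (fst p) + w) (fst (snd p)) (snd (snd p))), snd p)"
  by (cases p) (auto simp: Lflow_def split: prod.split)

lemma Lbarflow_bar_swap: "Lbarflow \<Theta> w (bar_swap p) = bar_swap (Lflow \<Theta> (cj w) p)"
  by (simp add: Lflow_eq Lbarflow_eq bar_swap_def Theta_bar_def vec_eq_iff)

lemma Lflow_bar_swap: "Lflow \<Theta> w (bar_swap p) = bar_swap (Lbarflow \<Theta> (cj w) p)"
  by (simp add: Lflow_eq Lbarflow_eq bar_swap_def Theta_bar_def vec_eq_iff)

lemma Lflow_step_eq_conj_germ:
  "Lflow \<Theta> (ws (Suc n)) (G ws) = conj_germ (\<lambda>ws. Lbarflow \<Theta> (ws (Suc n)) (conj_germ G ws)) ws"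
  by (simp add: conj_germ_def Lbarflow_bar_swap)

lemma Gamma_u_eq_conj_germ: "Gamma_u \<Theta> n = conj_germ (Gamma \<Theta> n)"
  by (induction n) (auto simp: fun_eq_iff conj_germ_def Lflow_bar_swap Lbarflow_bar_swap)

lemma sum_e_mt_telescope: "(\<Sum>l=1..k. e_mt \<Theta> l) = int (r_rk \<Theta> (k + 2)) - int (r_rk \<Theta> 2)"
  unfolding e_mt_def using sum_Suc_diff[of 1 k "\<lambda>l. int (r_rk \<Theta> (l + 1))"]
  by (simp add: numeral_2_eq_2)

lemma sum_e_mt_stable:
  assumes "\<forall>l>\<kappa>. e_mt \<Theta> l = 0" "\<kappa> \<le> k"
  shows "(\<Sum>l=1..k. e_mt \<Theta> l) = (\<Sum>l=1..\<kappa>. e_mt \<Theta> l)"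
  using assms by (intro sum.mono_neutral_left[symmetric]) auto

context holomorphic_germ
begin

lemma regular_germ_Lflow_step:
  "regular_germ n G \<Longrightarrow> regular_germ (Suc n) (\<lambda>ws. Lflow \<Theta> (ws (Suc n)) (G ws))"
  unfolding Lflow_step_eq_conj_germ
  by (intro regular_germ_conj_germ regular_germ_Lbarflow_step)

lemma gen_rk_Lflow_step:
  assumes G: "regular_germ n G"
  shows "gen_rk (\<lambda>ws. flat_pt (Lflow \<Theta> (ws (Suc n)) (G ws))) (Suc n)
           = CARD('m) + gen_rk (\<lambda>ws. flat_t (snd (G ws))) n"
proof -
  have G': "regular_germ n (conj_germ G)" by (rule regular_germ_conj_germ[OF G])
  have "gen_rk (\<lambda>ws. flat_pt (Lflow \<Theta> (ws (Suc n)) (G ws))) (Suc n)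
      = gen_rk (\<lambda>ws. flat_pt (Lbarflow \<Theta> (ws (Suc n)) (conj_germ G ws))) (Suc n)"
    unfolding Lflow_step_eq_conj_germ by (rule gen_rk_conj_germ(1)[OF regular_germ_Lbarflow_step[OF G']])
  also have "\<dots> = CARD('m) + gen_rk (\<lambda>ws. flat_t (fst (conj_germ G ws))) n"
    by (rule gen_rk_Lbarflow_step[OF G'])
  also have "\<dots> = CARD('m) + gen_rk (\<lambda>ws. flat_t (snd (G ws))) n"
    by (simp add: gen_rk_conj_germ(2)[OF G])
  finally show ?thesis .
qed

lemma Gamma_Suc:
  "Gamma \<Theta> (Suc n) = (if even n then (\<lambda>ws. Lflow \<Theta> (ws (Suc n)) (Gamma \<Theta> n ws))
                       else (\<lambda>ws. Lbarflow \<Theta> (ws (Suc n)) (Gamma \<Theta> n ws)))"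
  by (simp add: fun_eq_iff)

lemma regular_germ_Gamma: "regular_germ n (Gamma \<Theta> n)"
proof (induction n)
  case 0
  have "Gamma \<Theta> 0 = (\<lambda>ws. 0)" by (simp add: fun_eq_iff)
  then show ?case using regular_germ_0 by simp
next
  case (Suc n)
  then show ?case
    unfolding Gamma_Suc by (simp add: regular_germ_Lflow_step regular_germ_Lbarflow_step)
qed

lemma gen_rk_Gamma_Suc:
  "gen_rk (\<lambda>ws. flat_pt (Gamma \<Theta> (Suc n) ws)) (Suc n)
     = CARD('m) + gen_rk (\<lambda>ws. flat_t (psi \<Theta> n ws)) n"
  unfolding Gamma_Suc psi_def
  by (simp add: gen_rk_Lflow_step gen_rk_Lbarflow_step regular_germ_Gamma)

lemma gen_rk_Gamma_u:
  "gen_rk (\<lambda>ws. flat_pt (Gamma_u \<Theta> n ws)) n = gen_rk (\<lambda>ws. flat_pt (Gamma \<Theta> n ws)) n"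
  unfolding Gamma_u_eq_conj_germ by (rule gen_rk_conj_germ(1)[OF regular_germ_Gamma])

lemma gen_rk_psi_u:
  "gen_rk (\<lambda>ws. flat_t (psi_u \<Theta> n ws)) n = gen_rk (\<lambda>ws. flat_t (psi \<Theta> n ws)) n"
  unfolding psi_u_def psi_def Gamma_u_eq_conj_germ
  by (cases "even n") (simp_all add: gen_rk_conj_germ(2,3)[OF regular_germ_Gamma])

lemma gen_rk_psi_1: "gen_rk (\<lambda>ws. flat_t (psi \<Theta> 1 ws)) 1 = CARD('m)"
proof -
  have "flat_pt (Gamma \<Theta> 1 ws) = embed_left (flat_t (psi \<Theta> 1 ws))" for ws
    by (simp add: psi_def Lflow_eq flat_pt_def embed_left_def vec_eq_iff split: sum.split)
  then have "gen_rk (\<lambda>ws. flat_t (psi \<Theta> 1 ws)) 1 = gen_rk (\<lambda>ws. flat_pt (Gamma \<Theta> 1 ws)) 1"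
    by (simp add: gen_rk_def rank_at_embed_left)
  also have "\<dots> = CARD('m)" using gen_rk_Gamma_Suc[of 0] by (simp add: gen_rk_0)
  finally show ?thesis .
qed

lemma gen_rk_psi_eq_sum:
  "int (gen_rk (\<lambda>ws. flat_t (psi \<Theta> (k + 1) ws)) (k + 1)) = int CARD('m) + (\<Sum>l=1..k. e_mt \<Theta> l)"
proof -
  have r: "r_rk \<Theta> (k + 2) = CARD('m) + gen_rk (\<lambda>ws. flat_t (psi \<Theta> (k + 1) ws)) (k + 1)" for k
    using gen_rk_Gamma_Suc[of "k + 1"] by (simp add: r_rk_def)
  have "r_rk \<Theta> 2 = 2 * CARD('m)" using r[of 0] gen_rk_psi_1 by (simp add: numeral_2_eq_2)
  then show ?thesis unfolding sum_e_mt_telescope using r[of k] by simp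
qed

end

theorem lemma7p14:
  fixes \<Theta> :: "complex^'m::finite \<Rightarrow> complex^'m \<Rightarrow> complex^'d::finite \<Rightarrow> complex^'d"
    and \<kappa> :: nat
  assumes hol: "holomorphic_near_0 \<Theta>"
    and origin: "\<Theta> 0 0 0 = 0"
    and real_eq: "\<exists>V. open V \<and> (0::('m,'d) cpt2) \<in> V \<and>
         (\<forall>w z \<zeta> \<xi>. ((w, z), (\<zeta>, \<xi>)) \<in> V \<longrightarrow>
            (z = \<xi> + \<i> *s Theta_bar \<Theta> w \<zeta> \<xi> \<longleftrightarrow> \<xi> = z - \<i> *s \<Theta> \<zeta> w z))"
    and kappa: "\<forall>l\<in>{1..\<kappa>}. e_mt \<Theta> l > 0" "\<forall>l>\<kappa>. e_mt \<Theta> l = 0"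
  shows
    "(\<forall>k. gen_rk (\<lambda>ws. flat_pt (Gamma \<Theta> (k + 2) ws)) (k + 2)
            = CARD('m) + gen_rk (\<lambda>ws. flat_t (psi \<Theta> (k + 1) ws)) (k + 1))
   \<and> (\<forall>k\<le>\<kappa>. int (gen_rk (\<lambda>ws. flat_t (psi \<Theta> (k + 1) ws)) (k + 1))
            = int CARD('m) + (\<Sum>l=1..k. e_mt \<Theta> l))
   \<and> (\<forall>k\<ge>\<kappa>. int (gen_rk (\<lambda>ws. flat_t (psi \<Theta> (k + 1) ws)) (k + 1))
            = int CARD('m) + (\<Sum>l=1..\<kappa>. e_mt \<Theta> l))
   \<and> (\<forall>k. gen_rk (\<lambda>ws. flat_pt (Gamma_u \<Theta> (k + 2) ws)) (k + 2)
            = CARD('m) + gen_rk (\<lambda>ws. flat_t (psi_u \<Theta> (k + 1) ws)) (k + 1))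
   \<and> (\<forall>k\<le>\<kappa>. int (gen_rk (\<lambda>ws. flat_t (psi_u \<Theta> (k + 1) ws)) (k + 1))
            = int CARD('m) + (\<Sum>l=1..k. e_mt \<Theta> l))
   \<and> (\<forall>k\<ge>\<kappa>. int (gen_rk (\<lambda>ws. flat_t (psi_u \<Theta> (k + 1) ws)) (k + 1))
            = int CARD('m) + (\<Sum>l=1..\<kappa>. e_mt \<Theta> l))"
proof -
  interpret holomorphic_germ \<Theta> using hol origin by unfold_locales
  have step: "gen_rk (\<lambda>ws. flat_pt (Gamma \<Theta> (k + 2) ws)) (k + 2)
      = CARD('m) + gen_rk (\<lambda>ws. flat_t (psi \<Theta> (k + 1) ws)) (k + 1)" for k
    using gen_rk_Gamma_Suc[of "k + 1"] by (simp only: Suc_eq_plus1 add.assoc one_add_one)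
  have stable: "int (gen_rk (\<lambda>ws. flat_t (psi \<Theta> (k + 1) ws)) (k + 1))
      = int CARD('m) + (\<Sum>l=1..\<kappa>. e_mt \<Theta> l)" if "\<kappa> \<le> k" for k
    using gen_rk_psi_eq_sum[of k] sum_e_mt_stable[OF kappa(2) that] by (simp only:)
  show ?thesis
    unfolding gen_rk_Gamma_u gen_rk_psi_u using step gen_rk_psi_eq_sum stable by blast
qed

end
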